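(* Let $H=([d],E)$ be a connected graph on $d\ge2$ vertices and $r>0$. For $x\in\mathbb X$ let $B(x,r)=\{y:\rho(x,y)\le r\}$, and define $A_{r,k}=\int_{\mathbb X}\lambda(B(x,r))^k\,d\lambda(x)$ and $B_r=\operatorname*{ess\,sup}_{x\in\mathbb X}\lambda(B(x,r))$. Let $f=g^{sym}_{H,r}$ and, for $n=1,\dots,d$, $f_n(x_1,\ldots,x_n)=\int_{\mathbb X^{d-n}}f(x_1,\ldots,x_n,y_{n+1},\ldots,y_d)\,d\lambda^{\otimes(d-n)}(y_{n+1},\ldots,y_d)$. Then for $n=1,\ldots,d$, $$\|f_n\|_{\{[n]\}}\le\sqrt{A_{dr,2d-n-1}}\le B_{dr}^{d-\frac{n+1}{2}}\sqrt{\lambda(\mathbb X)},$$ for every $\mathcal J\in\mathcal P_{[n]}$ with $|\mathcal J|\ge2$, $$\|f_n\|_{\mathcal J}\le B_{dr}^{d-\frac n2},$$ and for $n=1,\dots,d$, $k=1,\dots,n$ and $\mathcal J\in\mathcal P_{\{k+1,\ldots,n\}}$, $$\big\|\|f_n\|_{\mathcal J}\big\|_\infty\le B_{dr}^{d-\frac{n+k}{2}}.$$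
   Context: $\mathbb X$ is a Polish space with metric $\rho$ and Borel $\sigma$-field, $\lambda$ a $\sigma$-finite measure on it. $g_{H,r}(x_1,\ldots,x_d)=\prod_{\{k,l\}\in E}\mathbf 1\{\rho(x_k,x_l)\le r\}$ and $g^{sym}(x_1,\dots,x_d)=\frac1{d!}\sum_{\pi\in S_d}g(x_{\pi(1)},\dots,x_{\pi(d)})$. Partition norms: for $I\subseteq[n]$, $\mathcal P_I$ is the set of partitions of $I$ into nonempty blocks ($\mathcal P_\emptyset=\{\emptyset\}$), $|\mathcal J|$ the number of blocks, $x_I=(x_i)_{i\in I}$. For $h\in L_2(\mathbb X^I,\lambda^{\otimes |I|})$ and $\mathcal J=\{J_1,\dots,J_m\}\in\mathcal P_I$, $\|h\|_{\mathcal J}=\sup\{\int h(x_I)\prod_{j=1}^m\varphi_j(x_{J_j})d\lambda^{\otimes|I|}(x_I):\|\varphi_j\|_{L_2(\mathbb X^{J_j})}\le1\}$; thus $\|h\|_{\{[n]\}}=\|h\|_2$. For $\mathcal J\in\mathcal P_I$ with $I\subsetneq[n]$, $\|\|f_n\|_{\mathcal J}\|_\infty$ is the essential supremum over $x_{I^c}$ of $\|f_n(x_{I^c},\cdot)\|_{\mathcal J}$; for $I=\emptyset$ it is $\|f_n\|_\infty$. *)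

theory Defs
  imports "HOL-Analysis.Analysis" "HOL-Library.Disjoint_Sets" "HOL-Combinatorics.Permutations"
begin

definition graph_on :: "nat set \<Rightarrow> nat set set \<Rightarrow> bool" where
  "graph_on V E \<longleftrightarrow> (\<forall>e\<in>E. e \<subseteq> V \<and> card e = 2)"

definition connected_graph :: "nat set \<Rightarrow> nat set set \<Rightarrow> bool" where
  "connected_graph V E \<longleftrightarrow> graph_on V E \<and>
     (\<forall>u\<in>V. \<forall>v\<in>V. (u, v) \<in> {(a, b). {a, b} \<in> E}\<^sup>*)"

definition g_graph :: "nat set set \<Rightarrow> real \<Rightarrow> (nat \<Rightarrow> 'a::metric_space) \<Rightarrow> ennreal" where
  "g_graph E r x = (\<Prod>e\<in>E. of_bool (\<forall>k\<in>e. \<forall>l\<in>e. dist (x k) (x l) \<le> r))"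

definition symmetrize :: "nat \<Rightarrow> ((nat \<Rightarrow> 'a) \<Rightarrow> ennreal) \<Rightarrow> (nat \<Rightarrow> 'a) \<Rightarrow> ennreal" where
  "symmetrize d g x = (\<Sum>\<pi>\<in>{\<pi>. \<pi> permutes {1..d}}. g (x \<circ> \<pi>)) / of_nat (fact d)"

definition marginal :: "'a measure \<Rightarrow> nat \<Rightarrow> nat \<Rightarrow> ((nat \<Rightarrow> 'a) \<Rightarrow> ennreal) \<Rightarrow> (nat \<Rightarrow> 'a) \<Rightarrow> ennreal" where
  "marginal M d n f x =
     (\<integral>\<^sup>+ y. f (merge {1..n} {n+1..d} (x, y)) \<partial>(PiM {n+1..d} (\<lambda>_. M)))"

text \<open>Partition norm ||h||_P for a nonnegative function h on X^I, P a partition of I.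
  Test functions phi_J on X^J with L2 norm at most 1 (nonnegative suffices for h >= 0).\<close>
definition pnorm :: "'a measure \<Rightarrow> nat set \<Rightarrow> nat set set \<Rightarrow> ((nat \<Rightarrow> 'a) \<Rightarrow> ennreal) \<Rightarrow> ennreal" where
  "pnorm M I P h = (SUP \<phi> \<in> {\<phi>. \<forall>J\<in>P. \<phi> J \<in> borel_measurable (PiM J (\<lambda>_. M)) \<and>
                               (\<integral>\<^sup>+ y. (\<phi> J y)\<^sup>2 \<partial>(PiM J (\<lambda>_. M))) \<le> 1}.
        \<integral>\<^sup>+ x. h x * (\<Prod>J\<in>P. \<phi> J (restrict x J)) \<partial>(PiM I (\<lambda>_. M)))"

definition ess_sup :: "'b measure \<Rightarrow> ('b \<Rightarrow> ennreal) \<Rightarrow> ennreal" where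
  "ess_sup N g = Inf {c. AE x in N. g x \<le> c}"

definition epowr :: "ennreal \<Rightarrow> real \<Rightarrow> ennreal" where
  "epowr x a = (if a = 0 then 1 else if x = top then top else ennreal (enn2real x powr a))"

definition A_const :: "'a::metric_space measure \<Rightarrow> real \<Rightarrow> nat \<Rightarrow> ennreal" where
  "A_const M r k = (\<integral>\<^sup>+ x. (emeasure M (cball x r)) ^ k \<partial>M)"

definition B_const :: "'a::metric_space measure \<Rightarrow> real \<Rightarrow> ennreal" where
  "B_const M r = ess_sup M (\<lambda>x. emeasure M (cball x r))"

end

theory Submission
  imports Defs "HOL-Probability.Essential_Supremum"
begin

(* Since H is connected, a nonzero term g_{H,r}(x o pi) forces any two of the d points to be
   within distance d r (follow a path of H), so f <= D, the indicator that all pairwise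
   distances are at most R = d r. For any chosen centre z_j, D confines the other coordinates
   to the ball B(z_j, R), and integrating such a coordinate out costs a factor
   lambda(B(z_j, R)) <= B_R; in particular f_n(z) <= lambda(B(z_j, R))^(d-n) D_n(z) for every
   j <= n. Each bound is then one application of Cauchy-Schwarz. For a single block the squared
   weight integrates to A_{R, 2d-n-1}. For a partition with blocks J and J^c (two or more
   blocks), D = D^2 lets us attach lambda(B(z_j, R))^(d-n) D to phi_J with centre j in J, and D to
   the remaining test functions with centre k outside J; the two square integrals are then at
   most B_R^(2(d-n)+|J^c|) and B_R^|J|. For sections, fixing x_1 bounds f_n by B_R^(d-n) times the
   indicator that every y_i lies in B(x_1, R). *)

section \<open>Real powers of extended nonnegative reals\<close>

lemma epowr_0_right [simp]: "epowr x 0 = 1"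
  by (simp add: epowr_def)

lemma epowr_top [simp]: "a \<noteq> 0 \<Longrightarrow> epowr top a = top"
  by (simp add: epowr_def)

lemma epowr_eq_0_iff: "a \<noteq> 0 \<Longrightarrow> epowr x a = 0 \<longleftrightarrow> x = 0"
  by (cases x) (auto simp: epowr_def)

lemma epowr_1_right [simp]: "epowr x 1 = x"
  by (cases x) (auto simp: epowr_def)

lemma epowr_1_left [simp]: "epowr 1 a = 1"
  by (simp add: epowr_def)

lemma epowr_mono: "x \<le> y \<Longrightarrow> 0 \<le> a \<Longrightarrow> epowr x a \<le> epowr y a"
  by (cases x; cases y) (auto simp: epowr_def top_unique intro!: ennreal_leI powr_mono2)

lemma epowr_add:
  assumes "0 \<le> a" "0 \<le> b"
  shows "epowr x (a + b) = epowr x a * epowr x b"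
proof (cases "a = 0 \<or> b = 0")
  case False
  with assms show ?thesis
    by (cases x) (auto simp: epowr_def powr_add ennreal_mult)
qed auto

lemma epowr_mult:
  assumes "0 \<le> a"
  shows "epowr (x * y) a = epowr x a * epowr y a"
proof (cases "a = 0 \<or> x = 0 \<or> y = 0")
  case True
  then show ?thesis by (auto simp: epowr_def)
next
  case False
  show ?thesis
  proof (cases "x = top \<or> y = top")
    case True
    with False show ?thesis
      by (auto simp: ennreal_mult_eq_top_iff epowr_eq_0_iff)
  next
    case False
    with \<open>\<not> (a = 0 \<or> x = 0 \<or> y = 0)\<close> assms show ?thesis
      by (cases x; cases y) (auto simp: epowr_def powr_mult ennreal_mult[symmetric])
  qed
qed

lemma epowr_power: "0 \<le> a \<Longrightarrow> epowr (x ^ k) a = epowr x (real k * a)"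
proof (induction k)
  case 0
  then show ?case by (simp add: epowr_def)
next
  case (Suc k)
  then show ?case
    by (simp add: epowr_mult epowr_add[symmetric] algebra_simps)
qed

lemma epowr_of_nat: "epowr x (real k) = x ^ k"
  using epowr_power[of 1 x k] by simp

lemma le_epowr_half: "y\<^sup>2 \<le> x \<Longrightarrow> y \<le> epowr x (1/2)"
  using epowr_mono[of "y\<^sup>2" x "1/2"] by (simp add: epowr_power)

lemma Cauchy_Schwarz_nn_integral_epowr:
  assumes "f \<in> borel_measurable M" "g \<in> borel_measurable M"
  shows "(\<integral>\<^sup>+x. f x * g x \<partial>M)
    \<le> epowr (\<integral>\<^sup>+x. f x ^ 2 \<partial>M) (1/2) * epowr (\<integral>\<^sup>+x. g x ^ 2 \<partial>M) (1/2)"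
  using le_epowr_half[OF Cauchy_Schwarz_nn_integral[OF assms]] by (simp add: epowr_mult)

section \<open>Distances along connected graphs\<close>

lemma rtrancl_first_step_avoiding:
  assumes "(u, v) \<in> R\<^sup>*" "v \<noteq> u"
  shows "\<exists>w. (u, w) \<in> R \<and> (w, v) \<in> (R \<inter> (- {u}) \<times> (- {u}))\<^sup>*"
  using assms
proof (induction rule: rtrancl_induct)
  case (step b c)
  show ?case
  proof (cases "b = u")
    case True
    then show ?thesis using step.hyps(2) by blast
  next
    case False
    then obtain w where "(u, w) \<in> R" "(w, b) \<in> (R \<inter> (- {u}) \<times> (- {u}))\<^sup>*"
      using step.IH by blast
    moreover have "(b, c) \<in> R \<inter> (- {u}) \<times> (- {u})"
      using step.hyps(2) step.prems False by blast
    ultimately show ?thesis by (meson rtrancl.rtrancl_into_rtrancl)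
  qed
qed simp

(* A walk need not be short; after its first step it can be taken to avoid the start vertex,
   which makes an induction on the vertex set possible. *)
lemma rtrancl_dist_le:
  fixes x :: "'b \<Rightarrow> 'a::metric_space"
  assumes "finite V" "R \<subseteq> V \<times> V" "(u, v) \<in> R\<^sup>*" "0 \<le> r"
    and short: "\<And>a b. (a, b) \<in> R \<Longrightarrow> dist (x a) (x b) \<le> r"
  shows "dist (x u) (x v) \<le> real (card V) * r"
  using assms(1-3) short
proof (induction "card V" arbitrary: V R u rule: less_induct)
  case less
  show ?case
  proof (cases "v = u")
    case True
    then show ?thesis using \<open>0 \<le> r\<close> by simp
  next
    case False
    let ?R = "R \<inter> (- {u}) \<times> (- {u})"
    obtain w where uw: "(u, w) \<in> R" and wv: "(w, v) \<in> ?R\<^sup>*"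
      using rtrancl_first_step_avoiding[OF less.prems(3) False] by blast
    have u: "u \<in> V" using uw less.prems(2) by blast
    have "card (V - {u}) < card V"
      using less.prems(1) u by (rule card_Diff1_less)
    moreover have "?R \<subseteq> (V - {u}) \<times> (V - {u})" using less.prems(2) by blast
    ultimately have "dist (x w) (x v) \<le> real (card (V - {u})) * r"
      using less.hyps[of "V - {u}" ?R w] less.prems(1,4) wv by blast
    moreover have "dist (x u) (x w) \<le> r" using uw less.prems(4) by blast
    moreover have "real (card V) * r = r + real (card (V - {u})) * r"
      by (simp add: card_Suc_Diff1[OF less.prems(1) u, symmetric] algebra_simps)
    ultimately show ?thesis
      using dist_triangle[of "x u" "x v" "x w"] by linarith
  qed
qed

lemma g_graph_eq_of_bool:
  "finite E \<Longrightarrow> g_graph E r x = of_bool (\<forall>e\<in>E. \<forall>k\<in>e. \<forall>l\<in>e. dist (x k) (x l) \<le> r)"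
  unfolding g_graph_def by (cases "\<forall>e\<in>E. \<forall>k\<in>e. \<forall>l\<in>e. dist (x k) (x l) \<le> r") (auto intro: prod_zero)

lemma connected_graph_dist_le:
  fixes x :: "nat \<Rightarrow> 'a::metric_space"
  assumes G: "connected_graph {1..d} E" and "0 \<le> r" and "g_graph E r x \<noteq> 0"
    and "u \<in> {1..d}" "v \<in> {1..d}"
  shows "dist (x u) (x v) \<le> real d * r"
proof -
  define R where "R = {(a, b). {a, b} \<in> E}"
  have E: "e \<subseteq> {1..d}" if "e \<in> E" for e
    using G that by (auto simp: connected_graph_def graph_on_def)
  then have "finite E" by (intro finite_subset[of E "Pow {1..d}"]) auto
  then have short: "dist (x a) (x b) \<le> r" if "(a, b) \<in> R" for a b
    using that \<open>g_graph E r x \<noteq> 0\<close> by (auto simp: R_def g_graph_eq_of_bool)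
  have "R \<subseteq> {1..d} \<times> {1..d}" using E by (auto simp: R_def)
  moreover have "(u, v) \<in> R\<^sup>*"
    using G assms(4,5) unfolding connected_graph_def R_def by blast
  ultimately show ?thesis
    using rtrancl_dist_le[OF _ _ _ \<open>0 \<le> r\<close> short, of "{1..d}"] by simp
qed

section \<open>The diameter indicator\<close>

definition diam_indicator :: "nat set \<Rightarrow> real \<Rightarrow> (nat \<Rightarrow> 'a::metric_space) \<Rightarrow> ennreal" where
  "diam_indicator S R x = of_bool (\<forall>i\<in>S. \<forall>l\<in>S. dist (x i) (x l) \<le> R)"

lemma diam_indicator_le_1: "diam_indicator S R x \<le> 1"
  by (simp add: diam_indicator_def)

lemma diam_indicator_square [simp]: "diam_indicator S R x ^ 2 = diam_indicator S R x"
  by (simp add: diam_indicator_def)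

lemma diam_indicator_empty [simp]: "diam_indicator {} R x = 1"
  by (simp add: diam_indicator_def)

lemma diam_indicator_cong:
  "(\<And>i. i \<in> S \<Longrightarrow> x i = y i) \<Longrightarrow> diam_indicator S R x = diam_indicator S R y"
  by (simp add: diam_indicator_def)

lemma diam_indicator_permutes:
  assumes "\<pi> permutes S"
  shows "diam_indicator S R (x \<circ> \<pi>) = diam_indicator S R x"
proof -
  have "(\<forall>i\<in>S. \<forall>l\<in>S. P i l) \<longleftrightarrow> (\<forall>i\<in>\<pi> ` S. \<forall>l\<in>\<pi> ` S. P i l)" for P
    using permutes_image[OF assms] by simp
  from this[of "\<lambda>i l. dist (x i) (x l) \<le> R"] show ?thesis
    by (simp add: diam_indicator_def)
qed

lemma diam_indicator_le_box:
  assumes "T \<subseteq> S" "c \<in> S" "K \<subseteq> S"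
  shows "diam_indicator S R z \<le> diam_indicator T R z * (\<Prod>i\<in>K. indicator (cball (z c) R) (z i))"
proof (cases "\<forall>i\<in>S. \<forall>l\<in>S. dist (z i) (z l) \<le> R")
  case True
  with assms have "(\<Prod>i\<in>K. indicator (cball (z c) R) (z i) :: ennreal) = 1"
    by (intro prod.neutral) (auto simp: indicator_def)
  moreover have "diam_indicator T R z = 1"
    using True assms(1) by (auto simp: diam_indicator_def)
  ultimately show ?thesis by (simp add: diam_indicator_le_1)
next
  case False
  then have "diam_indicator S R z = 0" by (simp add: diam_indicator_def)
  then show ?thesis by simp
qed

lemma g_graph_le_diam_indicator:
  assumes "connected_graph {1..d} E" "0 \<le> r"
  shows "g_graph E r x \<le> diam_indicator {1..d} (real d * r) x"
proof (cases "g_graph E r x = 0")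
  case False
  then have "diam_indicator {1..d} (real d * r) x = 1"
    by (auto simp: diam_indicator_def intro!: connected_graph_dist_le[OF assms False])
  moreover have "g_graph E r x \<le> 1"
    unfolding g_graph_def by (intro prod_le_1) auto
  ultimately show ?thesis by simp
qed simp

lemma symmetrize_le:
  assumes "\<And>\<pi>. \<pi> permutes {1..d} \<Longrightarrow> g (x \<circ> \<pi>) \<le> c"
  shows "symmetrize d g x \<le> c"
proof -
  let ?S = "{\<pi>. \<pi> permutes {1..d}}"
  have "(\<Sum>\<pi>\<in>?S. g (x \<circ> \<pi>)) \<le> of_nat (card ?S) * c"
    using sum_mono[of ?S "\<lambda>\<pi>. g (x \<circ> \<pi>)" "\<lambda>_. c"] assms by simp
  also have "card ?S = fact d"
    using card_permutations[of "{1..d}" d] by simp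
  finally have "(\<Sum>\<pi>\<in>?S. g (x \<circ> \<pi>)) / of_nat (fact d) \<le> of_nat (fact d) * c / of_nat (fact d)"
    by (rule divide_right_mono_ennreal)
  also have "\<dots> = c"
    by (simp add: ennreal_mult_divide_eq mult.commute)
  finally show ?thesis
    unfolding symmetrize_def .
qed

lemma symmetrize_g_graph_le_diam_indicator:
  assumes "connected_graph {1..d} E" "0 \<le> r"
  shows "symmetrize d (g_graph E r) x \<le> diam_indicator {1..d} (real d * r) x"
proof (rule symmetrize_le)
  fix \<pi> assume "\<pi> permutes {1..d}"
  then show "g_graph E r (x \<circ> \<pi>) \<le> diam_indicator {1..d} (real d * r) x"
    using g_graph_le_diam_indicator[OF assms, of "x \<circ> \<pi>"] by (simp add: diam_indicator_permutes)
qed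

section \<open>Test functions and product integrals\<close>

definition tensor :: "nat set set \<Rightarrow> (nat set \<Rightarrow> (nat \<Rightarrow> 'a) \<Rightarrow> ennreal) \<Rightarrow> (nat \<Rightarrow> 'a) \<Rightarrow> ennreal" where
  "tensor P \<phi> x = (\<Prod>J\<in>P. \<phi> J (restrict x J))"

definition test_functions :: "'a measure \<Rightarrow> nat set set \<Rightarrow> (nat set \<Rightarrow> (nat \<Rightarrow> 'a) \<Rightarrow> ennreal) set" where
  "test_functions M P = {\<phi>. \<forall>J\<in>P. \<phi> J \<in> borel_measurable (PiM J (\<lambda>_. M))
                          \<and> (\<integral>\<^sup>+y. (\<phi> J y)\<^sup>2 \<partial>PiM J (\<lambda>_. M)) \<le> 1}"

lemma ess_sup_le: "AE x in N. g x \<le> c \<Longrightarrow> ess_sup N g \<le> c"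
  unfolding ess_sup_def by (rule Inf_lower) simp

lemma pnorm_leI:
  assumes "\<And>\<phi>. \<phi> \<in> test_functions M P \<Longrightarrow> (\<integral>\<^sup>+x. h x * tensor P \<phi> x \<partial>PiM I (\<lambda>_. M)) \<le> c"
  shows "pnorm M I P h \<le> c"
  using assms unfolding pnorm_def test_functions_def tensor_def by (intro SUP_least) auto

lemma test_functions_subset: "\<phi> \<in> test_functions M P \<Longrightarrow> Q \<subseteq> P \<Longrightarrow> \<phi> \<in> test_functions M Q"
  by (auto simp: test_functions_def)

lemma tensor_remove: "finite P \<Longrightarrow> J \<in> P \<Longrightarrow> tensor P \<phi> x = \<phi> J (restrict x J) * tensor (P - {J}) \<phi> x"
  by (simp add: tensor_def prod.remove)

lemma tensor_restrict: "\<Union>P \<subseteq> K \<Longrightarrow> tensor P \<phi> (restrict x K) = tensor P \<phi> x"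
  unfolding tensor_def by (intro prod.cong refl arg_cong[where f = "\<phi> _"]) (auto simp: restrict_def fun_eq_iff)

lemma partition_on_remove_block:
  assumes "partition_on I P" "J \<in> P"
  shows "partition_on (I - J) (P - {J})"
proof -
  have "disjnt J (\<Union>(P - {J}))"
    using assms partition_onD2[OF assms(1)] by (auto simp: disjnt_def pairwise_def)
  moreover have "insert J (P - {J}) = P" using assms(2) by blast
  ultimately show ?thesis using partition_on_insert[of J "P - {J}" I] assms(1) by simp
qed

lemma partition_on_obtain_proper_block:
  assumes "partition_on I P" "2 \<le> card P"
  obtains J where "J \<in> P" "J \<noteq> {}" "I - J \<noteq> {}"
proof -
  obtain J where J: "J \<in> P" using assms(2) by fastforce
  moreover obtain J' where J': "J' \<in> P" "J' \<noteq> J"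
    using assms(2) card_mono[of "{J}" P] by fastforce
  moreover have "J' \<noteq> {}" "J' \<subseteq> I - J"
    using assms(1) J J' by (auto simp: partition_on_def pairwise_def disjnt_def)
  ultimately show thesis using that assms(1) by (auto simp: partition_on_def)
qed

locale borel_sigma_finite = sigma_finite_measure M
  for M :: "'a::{metric_space, second_countable_topology} measure" +
  assumes sets_M: "sets M = sets borel"
begin

abbreviation PM :: "nat set \<Rightarrow> (nat \<Rightarrow> 'a) measure" where
  "PM I \<equiv> PiM I (\<lambda>_. M)"

abbreviation ball_vol :: "real \<Rightarrow> 'a \<Rightarrow> ennreal" where
  "ball_vol R c \<equiv> emeasure M (cball c R)"

lemma product_sigma_finite: "product_sigma_finite (\<lambda>_::nat. M)"
  by (simp add: product_sigma_finite_def sigma_finite_measure_axioms)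

lemma measurable_component [measurable]: "i \<in> I \<Longrightarrow> (\<lambda>x. x i) \<in> PM I \<rightarrow>\<^sub>M borel"
  using measurable_component_singleton[of i I "\<lambda>_. M"] measurable_cong_sets[OF refl sets_M]
  by blast

lemma measurable_restrict_comp:
  "J \<subseteq> I \<Longrightarrow> g \<in> borel_measurable (PM J) \<Longrightarrow> (\<lambda>z. g (restrict z J)) \<in> borel_measurable (PM I)"
  using measurable_comp[OF measurable_restrict_subset] by (auto simp: comp_def)

lemma sets_cball [measurable]: "cball c R \<in> sets M"
  using sets_M by simp

lemma ball_vol_measurable [measurable]: "ball_vol R \<in> borel_measurable M"
proof -
  define Q where "Q = {p::'a \<times> 'a. dist (fst p) (snd p) \<le> R}"
  have "closed Q" unfolding Q_def
    by (intro closed_Collect_le continuous_intros)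
  then have "Q \<in> sets (borel :: ('a \<times> 'a) measure)" by simp
  also have "sets (borel :: ('a \<times> 'a) measure) = sets (M \<Otimes>\<^sub>M M)"
    using sets_M by (metis borel_prod sets_pair_measure_cong)
  finally have "(\<lambda>x. emeasure M (Pair x -` Q)) \<in> borel_measurable M"
    by (rule measurable_emeasure_Pair)
  moreover have "Pair x -` Q = cball x R" for x by (auto simp: Q_def cball_def)
  ultimately show ?thesis by simp
qed

lemma ball_vol_component_measurable [measurable]:
  "i \<in> I \<Longrightarrow> (\<lambda>z. ball_vol R (z i)) \<in> borel_measurable (PM I)"
  by (rule measurable_compose[OF measurable_component_singleton[of i I "\<lambda>_. M"] ball_vol_measurable])

lemma indicator_cball_measurable [measurable]:
  assumes "c \<in> I" "i \<in> I"
  shows "(\<lambda>z. indicator (cball (z c) R) (z i) :: ennreal) \<in> borel_measurable (PM I)"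
proof -
  have "(\<lambda>z. of_bool (dist (z c) (z i) \<le> R) :: ennreal) \<in> borel_measurable (PM I)"
    using assms by measurable
  then show ?thesis by (simp add: indicator_def cball_def)
qed

lemma diam_indicator_measurable [measurable]:
  assumes "finite S" "S \<subseteq> I"
  shows "diam_indicator S R \<in> borel_measurable (PM I)"
proof -
  have "Measurable.pred (PM I) (\<lambda>x. dist (x i) (x l) \<le> R)" if "i \<in> S" "l \<in> S" for i l
  proof -
    have "(\<lambda>x. dist (x i) (x l)) \<in> borel_measurable (PM I)"
      using that assms by (intro borel_measurable_dist measurable_component) auto
    then show ?thesis by (rule pred_le_const) simp
  qed
  then have "Measurable.pred (PM I) (\<lambda>x. \<forall>i\<in>S. \<forall>l\<in>S. dist (x i) (x l) \<le> R)"
    using assms(1) by (intro pred_intros_finite) auto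
  then show ?thesis unfolding diam_indicator_def by measurable
qed

lemma tensor_measurable [measurable]:
  assumes "\<Union>P \<subseteq> I" "\<And>J. J \<in> P \<Longrightarrow> \<phi> J \<in> borel_measurable (PM J)"
  shows "tensor P \<phi> \<in> borel_measurable (PM I)"
proof -
  have "(\<lambda>x. \<phi> J (restrict x J)) \<in> borel_measurable (PM I)" if "J \<in> P" for J
    using assms that by (intro measurable_restrict_comp) auto
  then show ?thesis unfolding tensor_def by measurable
qed

lemma AE_component:
  assumes "finite I" "j \<in> I" "AE w in M. Q w"
  shows "AE x in PM I. Q (x j)"
proof -
  obtain N where N: "{x \<in> space M. \<not> Q x} \<subseteq> N" "emeasure M N = 0" "N \<in> sets M"
    using assms(3) by (auto elim: AE_E)
  define A where "A i = (if i = j then N else space M)" for i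
  have "emeasure (PM I) (PiE I A) = (\<Prod>i\<in>I. emeasure M (A i))"
    using product_sigma_finite.emeasure_PiM[OF product_sigma_finite assms(1)] N by (auto simp: A_def)
  also have "\<dots> = 0" using assms N by (auto simp: A_def intro!: prod_zero)
  finally have "emeasure (PM I) (PiE I A) = 0" .
  moreover have "PiE I A \<in> sets (PM I)"
    using N by (auto simp: A_def intro!: sets_PiM_I_finite assms(1))
  moreover have "{x \<in> space (PM I). \<not> Q (x j)} \<subseteq> PiE I A"
    using N assms by (auto simp: space_PiM A_def PiE_def Pi_def)
  ultimately show ?thesis by (intro AE_I) auto
qed

lemma AE_ball_vol_le_B_const: "AE x in M. ball_vol R x \<le> B_const M R"
  using esssup_AE[of "ball_vol R" M]
  by (simp add: B_const_def ess_sup_def esssup_eq_AE)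

lemma nn_integral_tensor:
  assumes "finite P" "\<And>J. J \<in> P \<Longrightarrow> finite J" "disjoint P"
    and "\<And>J. J \<in> P \<Longrightarrow> \<phi> J \<in> borel_measurable (PM J)"
  shows "(\<integral>\<^sup>+x. tensor P \<phi> x \<partial>PM (\<Union>P)) = (\<Prod>J\<in>P. \<integral>\<^sup>+y. \<phi> J y \<partial>PM J)"
  using assms
proof (induction P rule: finite_induct)
  case empty
  show ?case by (simp add: tensor_def PiM_empty)
next
  case (insert J P)
  define U where "U = \<Union>P"
  have JU: "J \<inter> U = {}"
    using insert.prems(2) insert.hyps(2) by (auto simp: U_def pairwise_insert disjnt_def)
  have fin: "finite J" "finite U" using insert.prems(1) insert.hyps(1) by (auto simp: U_def)
  have [measurable]: "\<phi> J \<in> borel_measurable (PM J)" using insert.prems(3) by simp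
  have meas: "tensor Q \<phi> \<in> borel_measurable (PM V)" if "\<Union>Q \<subseteq> V" "Q \<subseteq> insert J P" for Q V
    using that insert.prems(3) by (intro tensor_measurable) auto
  have split: "tensor (insert J P) \<phi> (merge J U (x, y)) = \<phi> J x * tensor P \<phi> y"
    if "x \<in> space (PM J)" for x y
  proof -
    have "restrict (merge J U (x, y)) J = x"
      using JU that by (simp add: space_PiM PiE_restrict)
    moreover have "restrict (merge J U (x, y)) K = restrict y K" if "K \<in> P" for K
      using that JU by (auto simp: restrict_def merge_def fun_eq_iff U_def)
    ultimately show ?thesis
      using insert.hyps by (simp add: tensor_def)
  qed
  have "(\<integral>\<^sup>+x. tensor (insert J P) \<phi> x \<partial>PM (\<Union>(insert J P)))
      = (\<integral>\<^sup>+x. \<integral>\<^sup>+y. tensor (insert J P) \<phi> (merge J U (x, y)) \<partial>PM U \<partial>PM J)"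
    using product_sigma_finite.product_nn_integral_fold[OF product_sigma_finite JU fin meas]
    by (simp add: U_def)
  also have "\<dots> = (\<integral>\<^sup>+x. \<phi> J x * (\<integral>\<^sup>+y. tensor P \<phi> y \<partial>PM U) \<partial>PM J)"
  proof (rule nn_integral_cong)
    fix x assume "x \<in> space (PM J)"
    then show "(\<integral>\<^sup>+y. tensor (insert J P) \<phi> (merge J U (x, y)) \<partial>PM U) = \<phi> J x * (\<integral>\<^sup>+y. tensor P \<phi> y \<partial>PM U)"
      using meas[of P U] by (simp add: split nn_integral_cmult U_def[symmetric] subset_insertI)
  qed
  also have "\<dots> = (\<Prod>K\<in>insert J P. \<integral>\<^sup>+y. \<phi> K y \<partial>PM K)"
    using insert by (simp add: nn_integral_multc U_def pairwise_insert)
  finally show ?case .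
qed

lemma tensor_square_integral_le_1:
  assumes "partition_on A P" "finite A" "\<phi> \<in> test_functions M P"
  shows "(\<integral>\<^sup>+y. (tensor P \<phi> y)\<^sup>2 \<partial>PM A) \<le> 1"
proof -
  have P: "finite P" "disjoint P" "\<Union>P = A" "\<And>J. J \<in> P \<Longrightarrow> finite J"
    using assms(1,2) finite_elements[OF assms(2,1)]
    by (auto simp: partition_on_def intro: finite_subset)
  have "(tensor P \<phi> y)\<^sup>2 = tensor P (\<lambda>J y. (\<phi> J y)\<^sup>2) y" for y
    by (simp add: tensor_def prod_power_distrib)
  then have "(\<integral>\<^sup>+y. (tensor P \<phi> y)\<^sup>2 \<partial>PM A) = (\<integral>\<^sup>+y. tensor P (\<lambda>J y. (\<phi> J y)\<^sup>2) y \<partial>PM (\<Union>P))"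
    using P(3) by simp
  also have "\<dots> = (\<Prod>J\<in>P. \<integral>\<^sup>+y. (\<phi> J y)\<^sup>2 \<partial>PM J)"
    using P assms(3) by (intro nn_integral_tensor) (auto simp: test_functions_def)
  also have "\<dots> \<le> 1"
    using assms(3) by (intro prod_le_1) (auto simp: test_functions_def)
  finally show ?thesis .
qed

lemma nn_integral_box:
  "finite K \<Longrightarrow> (\<integral>\<^sup>+y. (\<Prod>i\<in>K. indicator (cball c R) (y i)) \<partial>PM K) = ball_vol R c ^ card K"
  using product_sigma_finite.product_nn_integral_prod[OF product_sigma_finite,
      of K "\<lambda>_. indicator (cball c R)"]
  by simp

lemma nn_integral_ball_box:
  assumes "I \<inter> K = {}" "finite I" "finite K" "c \<in> I"
    and [measurable]: "w \<in> borel_measurable (PM I)"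
  shows "(\<integral>\<^sup>+z. w (restrict z I) * (\<Prod>i\<in>K. indicator (cball (z c) R) (z i)) \<partial>PM (I \<union> K))
       = (\<integral>\<^sup>+x. w x * ball_vol R (x c) ^ card K \<partial>PM I)"
proof -
  have "(\<lambda>z. w (restrict z I)) \<in> borel_measurable (PM (I \<union> K))"
    using assms(5) by (intro measurable_restrict_comp) auto
  moreover have "(\<lambda>z. \<Prod>i\<in>K. indicator (cball (z c) R) (z i) :: ennreal) \<in> borel_measurable (PM (I \<union> K))"
    using assms(4) by (intro borel_measurable_prod_ennreal indicator_cball_measurable) auto
  ultimately have "(\<lambda>z. w (restrict z I) * (\<Prod>i\<in>K. indicator (cball (z c) R) (z i)))
      \<in> borel_measurable (PM (I \<union> K))"
    by (rule borel_measurable_times_ennreal)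
  from product_sigma_finite.product_nn_integral_fold[OF product_sigma_finite assms(1-3) this]
  have "(\<integral>\<^sup>+z. w (restrict z I) * (\<Prod>i\<in>K. indicator (cball (z c) R) (z i)) \<partial>PM (I \<union> K))
      = (\<integral>\<^sup>+x. \<integral>\<^sup>+y. w (restrict (merge I K (x, y)) I)
            * (\<Prod>i\<in>K. indicator (cball (merge I K (x, y) c) R) (merge I K (x, y) i)) \<partial>PM K \<partial>PM I)" .
  also have "\<dots> = (\<integral>\<^sup>+x. w x * ball_vol R (x c) ^ card K \<partial>PM I)"
  proof (rule nn_integral_cong)
    fix x assume x: "x \<in> space (PM I)"
    have "restrict (merge I K (x, y)) I = x" for y
      using x assms(1) by (simp add: space_PiM PiE_restrict)
    moreover have "(\<Prod>i\<in>K. indicator (cball (merge I K (x, y) c) R) (merge I K (x, y) i))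
        = (\<Prod>i\<in>K. indicator (cball (x c) R) (y i) :: ennreal)" for y
      using assms(1,4) by (intro prod.cong) (auto simp: merge_def)
    ultimately show "(\<integral>\<^sup>+y. w (restrict (merge I K (x, y)) I)
          * (\<Prod>i\<in>K. indicator (cball (merge I K (x, y) c) R) (merge I K (x, y) i)) \<partial>PM K)
        = w x * ball_vol R (x c) ^ card K"
      using assms(3) by (simp add: nn_integral_cmult nn_integral_box)
  qed
  finally show ?thesis .
qed

lemma nn_integral_ball_vol_power_le:
  assumes "finite I" "c \<in> I" "w \<in> borel_measurable (PM I)"
  shows "(\<integral>\<^sup>+x. w x * ball_vol R (x c) ^ p \<partial>PM I) \<le> B_const M R ^ p * (\<integral>\<^sup>+x. w x \<partial>PM I)"
proof -
  have "AE x in PM I. ball_vol R (x c) \<le> B_const M R"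
    using assms(1,2) AE_ball_vol_le_B_const by (rule AE_component)
  then have "(\<integral>\<^sup>+x. w x * ball_vol R (x c) ^ p \<partial>PM I) \<le> (\<integral>\<^sup>+x. B_const M R ^ p * w x \<partial>PM I)"
    by (intro nn_integral_mono_AE) (auto elim!: eventually_mono intro!: mult_left_mono power_mono simp: mult.commute)
  also have "\<dots> = B_const M R ^ p * (\<integral>\<^sup>+x. w x \<partial>PM I)"
    using assms(3) by (rule nn_integral_cmult)
  finally show ?thesis .
qed

lemma marginal_diam_indicator_le:
  assumes "j \<in> {1..n}" "n \<le> d"
  shows "marginal M d n (diam_indicator {1..d} R) z
    \<le> ball_vol R (z j) ^ (d - n) * diam_indicator {1..n} R z"
proof -
  let ?z = "\<lambda>y. merge {1..n} {n+1..d} (z, y)"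
  have "diam_indicator {1..d} R (?z y)
      \<le> diam_indicator {1..n} R z * (\<Prod>i\<in>{n+1..d}. indicator (cball (z j) R) (y i))" for y
  proof -
    have "diam_indicator {1..d} R (?z y)
        \<le> diam_indicator {1..n} R (?z y) * (\<Prod>i\<in>{n+1..d}. indicator (cball (?z y j) R) (?z y i))"
      using assms by (intro diam_indicator_le_box) auto
    also have "\<dots> = diam_indicator {1..n} R z * (\<Prod>i\<in>{n+1..d}. indicator (cball (z j) R) (y i))"
      using assms(1) by (intro arg_cong2[where f = "(*)"] diam_indicator_cong prod.cong)
        (auto simp: merge_def)
    finally show ?thesis .
  qed
  then have "marginal M d n (diam_indicator {1..d} R) z
      \<le> (\<integral>\<^sup>+y. diam_indicator {1..n} R z * (\<Prod>i\<in>{n+1..d}. indicator (cball (z j) R) (y i)) \<partial>PM {n+1..d})"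
    unfolding marginal_def by (intro nn_integral_mono)
  also have "\<dots> = ball_vol R (z j) ^ (d - n) * diam_indicator {1..n} R z"
    by (simp add: nn_integral_cmult nn_integral_box mult.commute)
  finally show ?thesis .
qed

lemma marginal_symmetrize_g_graph_le:
  assumes "connected_graph {1..d} E" "0 \<le> r" "j \<in> {1..n}" "n \<le> d"
  shows "marginal M d n (symmetrize d (g_graph E r)) z
    \<le> ball_vol (real d * r) (z j) ^ (d - n) * diam_indicator {1..n} (real d * r) z"
proof -
  have "marginal M d n (symmetrize d (g_graph E r)) z
      \<le> marginal M d n (diam_indicator {1..d} (real d * r)) z"
    unfolding marginal_def using assms(1,2)
    by (intro nn_integral_mono symmetrize_g_graph_le_diam_indicator)
  also have "\<dots> \<le> ball_vol (real d * r) (z j) ^ (d - n) * diam_indicator {1..n} (real d * r) z"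
    using assms(3,4) by (rule marginal_diam_indicator_le)
  finally show ?thesis .
qed

lemma nn_integral_square_diam_indicator_le:
  assumes "finite I" "J \<subseteq> I" "j \<in> J" and [measurable]: "\<psi> \<in> borel_measurable (PM J)"
  shows "(\<integral>\<^sup>+z. (ball_vol R (z j) ^ p * diam_indicator I R z * \<psi> (restrict z J))\<^sup>2 \<partial>PM I)
    \<le> (\<integral>\<^sup>+x. (\<psi> x)\<^sup>2 * ball_vol R (x j) ^ (2 * p + card (I - J)) \<partial>PM J)"
proof -
  define K where "K = I - J"
  have I: "I = J \<union> K" "J \<inter> K = {}" "finite J" "finite K"
    using assms(1,2) by (auto simp: K_def intro: finite_subset)
  define w where "w x = ball_vol R (x j) ^ (2 * p) * (\<psi> x)\<^sup>2" for x
  have [measurable]: "w \<in> borel_measurable (PM J)"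
    unfolding w_def using assms(3) by measurable
  have "(ball_vol R (z j) ^ p * diam_indicator I R z * \<psi> (restrict z J))\<^sup>2
      \<le> w (restrict z J) * (\<Prod>i\<in>K. indicator (cball (z j) R) (z i))" for z
  proof -
    have "(ball_vol R (z j) ^ p * diam_indicator I R z * \<psi> (restrict z J))\<^sup>2
        = w (restrict z J) * diam_indicator I R z"
      using assms(3) by (simp add: w_def power_mult_distrib power_mult[symmetric] mult_ac)
    also have "\<dots> \<le> w (restrict z J) * (\<Prod>i\<in>K. indicator (cball (z j) R) (z i))"
      using diam_indicator_le_box[of "{}" I j K R z] assms(2,3)
      by (intro mult_left_mono) (auto simp: K_def)
    finally show ?thesis .
  qed
  then have "(\<integral>\<^sup>+z. (ball_vol R (z j) ^ p * diam_indicator I R z * \<psi> (restrict z J))\<^sup>2 \<partial>PM I)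
      \<le> (\<integral>\<^sup>+z. w (restrict z J) * (\<Prod>i\<in>K. indicator (cball (z j) R) (z i)) \<partial>PM (J \<union> K))"
    unfolding I(1)[symmetric] by (rule nn_integral_mono)
  also have "\<dots> = (\<integral>\<^sup>+x. w x * ball_vol R (x j) ^ card K \<partial>PM J)"
    using I assms(3) by (intro nn_integral_ball_box) auto
  finally show ?thesis
    by (simp add: w_def K_def power_add mult_ac)
qed

lemma nn_integral_square_diam_indicator_le_B_const:
  assumes "finite I" "J \<subseteq> I" "j \<in> J" "\<psi> \<in> borel_measurable (PM J)"
  shows "(\<integral>\<^sup>+z. (ball_vol R (z j) ^ p * diam_indicator I R z * \<psi> (restrict z J))\<^sup>2 \<partial>PM I)
    \<le> B_const M R ^ (2 * p + card (I - J)) * (\<integral>\<^sup>+x. (\<psi> x)\<^sup>2 \<partial>PM J)"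
proof -
  have "(\<lambda>x. (\<psi> x)\<^sup>2) \<in> borel_measurable (PM J)"
    using assms(4) by measurable
  with nn_integral_square_diam_indicator_le[OF assms] show ?thesis
    by (rule order_trans[OF _ nn_integral_ball_vol_power_le[OF finite_subset[OF assms(2,1)] assms(3)]])
qed

lemma nn_integral_square_diam_indicator_le_A_const:
  assumes "finite I" "c \<in> I"
  shows "(\<integral>\<^sup>+z. (ball_vol R (z c) ^ m * diam_indicator I R z)\<^sup>2 \<partial>PM I)
    \<le> A_const M R (2 * m + card I - 1)"
proof -
  have "card I > 0" using assms by (auto simp: card_gt_0_iff)
  then have "2 * m + card (I - {c}) = 2 * m + card I - 1"
    using assms by simp
  moreover have "(\<integral>\<^sup>+x. ball_vol R (x c) ^ k \<partial>PM {c}) = A_const M R k" for k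
    unfolding A_const_def
    by (subst product_sigma_finite.product_nn_integral_singleton[OF product_sigma_finite]) simp_all
  ultimately show ?thesis
    using nn_integral_square_diam_indicator_le[of I "{c}" c "\<lambda>_. 1" R m] assms by simp
qed

section \<open>The norm bounds\<close>

lemma pnorm_single_block_le:
  assumes "finite I" "c \<in> I"
    and h: "\<And>z. h z \<le> ball_vol R (z c) ^ m * diam_indicator I R z"
  shows "pnorm M I {I} h \<le> epowr (A_const M R (2 * m + card I - 1)) (1/2)"
proof (rule pnorm_leI)
  fix \<phi> assume "\<phi> \<in> test_functions M {I}"
  then have [measurable]: "\<phi> I \<in> borel_measurable (PM I)" and \<phi>: "(\<integral>\<^sup>+x. (\<phi> I x)\<^sup>2 \<partial>PM I) \<le> 1"
    by (auto simp: test_functions_def)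
  let ?H = "\<lambda>z. ball_vol R (z c) ^ m * diam_indicator I R z"
  have [measurable]: "?H \<in> borel_measurable (PM I)"
    using assms(1,2) by measurable
  have "(\<integral>\<^sup>+x. h x * tensor {I} \<phi> x \<partial>PM I) \<le> (\<integral>\<^sup>+x. ?H x * \<phi> I x \<partial>PM I)"
    using h by (intro nn_integral_mono) (auto simp: tensor_def space_PiM intro!: mult_right_mono)
  also have "\<dots> \<le> epowr (\<integral>\<^sup>+x. (?H x)\<^sup>2 \<partial>PM I) (1/2) * epowr (\<integral>\<^sup>+x. (\<phi> I x)\<^sup>2 \<partial>PM I) (1/2)"
    by (intro Cauchy_Schwarz_nn_integral_epowr) measurable
  also have "\<dots> \<le> epowr (A_const M R (2 * m + card I - 1)) (1/2) * epowr 1 (1/2)"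
    using nn_integral_square_diam_indicator_le_A_const[OF assms(1,2)] \<phi>
    by (intro mult_mono epowr_mono) auto
  finally show "(\<integral>\<^sup>+x. h x * tensor {I} \<phi> x \<partial>PM I) \<le> epowr (A_const M R (2 * m + card I - 1)) (1/2)"
    by simp
qed

lemma epowr_A_const_le:
  "epowr (A_const M R k) (1/2) \<le> epowr (B_const M R) (real k / 2) * epowr (emeasure M (space M)) (1/2)"
proof -
  have "A_const M R k \<le> (\<integral>\<^sup>+x. B_const M R ^ k \<partial>M)"
    unfolding A_const_def using AE_ball_vol_le_B_const[of R]
    by (intro nn_integral_mono_AE) (auto elim!: eventually_mono intro!: power_mono)
  then have "A_const M R k \<le> B_const M R ^ k * emeasure M (space M)"
    by simp
  then have "epowr (A_const M R k) (1/2) \<le> epowr (B_const M R ^ k * emeasure M (space M)) (1/2)"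
    by (rule epowr_mono) simp
  then show ?thesis
    by (simp add: epowr_mult epowr_power)
qed

lemma nn_integral_diam_indicator_two_blocks_le:
  assumes "finite I" "J \<subseteq> I" "j \<in> J" "k \<in> I - J"
    and u: "u \<in> borel_measurable (PM J)" and v: "v \<in> borel_measurable (PM (I - J))"
  shows "(\<integral>\<^sup>+z. ball_vol R (z j) ^ m * diam_indicator I R z * u (restrict z J) * v (restrict z (I - J)) \<partial>PM I)
    \<le> epowr (B_const M R) (real m + real (card I) / 2)
        * epowr (\<integral>\<^sup>+x. (u x)\<^sup>2 \<partial>PM J) (1/2) * epowr (\<integral>\<^sup>+y. (v y)\<^sup>2 \<partial>PM (I - J)) (1/2)"
proof -
  let ?K = "I - J"
  \<comment> \<open>Split the weight using D = D * D; ?f is centred at j \<in> J, ?g at k \<notin> J.\<close>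
  let ?f = "\<lambda>z. ball_vol R (z j) ^ m * diam_indicator I R z * u (restrict z J)"
  let ?g = "\<lambda>z. ball_vol R (z k) ^ 0 * diam_indicator I R z * v (restrict z ?K)"
  have meas: "?f \<in> borel_measurable (PM I)" "?g \<in> borel_measurable (PM I)"
    using assms u v by (auto intro!: borel_measurable_times_ennreal borel_measurable_power_ennreal
        ball_vol_component_measurable diam_indicator_measurable measurable_restrict_comp)
  have "(\<integral>\<^sup>+z. ball_vol R (z j) ^ m * diam_indicator I R z * u (restrict z J) * v (restrict z ?K) \<partial>PM I)
      = (\<integral>\<^sup>+z. ?f z * ?g z \<partial>PM I)"
  proof -
    have DD: "diam_indicator I R z * (diam_indicator I R z * y) = diam_indicator I R z * y" for z y
      using diam_indicator_square[of I R z] by (simp add: power2_eq_square mult.assoc[symmetric])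
    show ?thesis by (intro nn_integral_cong) (simp add: DD mult_ac)
  qed
  also have "\<dots> \<le> epowr (\<integral>\<^sup>+z. (?f z)\<^sup>2 \<partial>PM I) (1/2) * epowr (\<integral>\<^sup>+z. (?g z)\<^sup>2 \<partial>PM I) (1/2)"
    using meas by (rule Cauchy_Schwarz_nn_integral_epowr)
  also have "\<dots> \<le> epowr (B_const M R ^ (2 * m + card ?K) * (\<integral>\<^sup>+x. (u x)\<^sup>2 \<partial>PM J)) (1/2)
      * epowr (B_const M R ^ card J * (\<integral>\<^sup>+y. (v y)\<^sup>2 \<partial>PM ?K)) (1/2)"
    using nn_integral_square_diam_indicator_le_B_const[OF assms(1,2,3) u, of R m]
      nn_integral_square_diam_indicator_le_B_const[of I ?K k v R 0] assms
    by (intro mult_mono epowr_mono) (auto simp: Diff_Diff_Int Int_absorb1)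
  also have "\<dots> = epowr (B_const M R) (real m + real (card I) / 2)
      * epowr (\<integral>\<^sup>+x. (u x)\<^sup>2 \<partial>PM J) (1/2) * epowr (\<integral>\<^sup>+y. (v y)\<^sup>2 \<partial>PM ?K) (1/2)"
  proof -
    have "card J \<le> card I" using assms(1,2) by (rule card_mono)
    then have "card I = card J + card ?K"
      using assms(1,2) finite_subset[OF assms(2,1)] by (simp add: card_Diff_subset)
    then have B: "epowr (B_const M R) (real (card J) / 2) * epowr (B_const M R) (real m + real (card ?K) / 2)
        = epowr (B_const M R) (real m + real (card I) / 2)"
      by (simp add: epowr_add[symmetric] add_divide_distrib algebra_simps)
    show ?thesis
      by (simp add: epowr_mult epowr_power add_divide_distrib mult_ac flip: B)
  qed
  finally show ?thesis .
qed

lemma pnorm_partition_le: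
  assumes "finite I" "partition_on I P" "2 \<le> card P"
    and h: "\<And>z j. j \<in> I \<Longrightarrow> h z \<le> ball_vol R (z j) ^ m * diam_indicator I R z"
  shows "pnorm M I P h \<le> epowr (B_const M R) (real m + real (card I) / 2)"
proof (rule pnorm_leI)
  fix \<phi> assume \<phi>: "\<phi> \<in> test_functions M P"
  obtain J where J: "J \<in> P" "J \<noteq> {}" "I - J \<noteq> {}"
    using assms(2,3) by (rule partition_on_obtain_proper_block)
  then obtain j k where jk: "j \<in> J" "k \<in> I - J" by blast
  have JI: "J \<subseteq> I" and "finite P"
    using assms(1,2) J(1) by (auto simp: partition_on_def intro: finite_elements)
  have rest: "partition_on (I - J) (P - {J})"
    using assms(2) J(1) by (rule partition_on_remove_block)
  have u: "\<phi> J \<in> borel_measurable (PM J)" "(\<integral>\<^sup>+x. (\<phi> J x)\<^sup>2 \<partial>PM J) \<le> 1"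
    using \<phi> J(1) by (auto simp: test_functions_def)
  have v_meas: "tensor (P - {J}) \<phi> \<in> borel_measurable (PM (I - J))"
    using \<phi> partition_onD1[OF rest] by (intro tensor_measurable) (auto simp: test_functions_def)
  have v_square: "(\<integral>\<^sup>+y. (tensor (P - {J}) \<phi> y)\<^sup>2 \<partial>PM (I - J)) \<le> 1"
    using assms(1) \<phi> by (intro tensor_square_integral_le_1[OF rest]) (auto intro: test_functions_subset)
  have "h z * tensor P \<phi> z \<le> ball_vol R (z j) ^ m * diam_indicator I R z
      * \<phi> J (restrict z J) * tensor (P - {J}) \<phi> (restrict z (I - J))" for z
  proof -
    have "tensor P \<phi> z = \<phi> J (restrict z J) * tensor (P - {J}) \<phi> (restrict z (I - J))"
      using \<open>finite P\<close> J(1) partition_onD1[OF rest] by (simp add: tensor_remove tensor_restrict)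
    then have "h z * tensor P \<phi> z \<le> (ball_vol R (z j) ^ m * diam_indicator I R z)
        * (\<phi> J (restrict z J) * tensor (P - {J}) \<phi> (restrict z (I - J)))"
      using h[of j z] JI jk by (auto intro!: mult_right_mono)
    then show ?thesis by (simp add: mult.assoc)
  qed
  then have "(\<integral>\<^sup>+z. h z * tensor P \<phi> z \<partial>PM I)
      \<le> (\<integral>\<^sup>+z. ball_vol R (z j) ^ m * diam_indicator I R z
           * \<phi> J (restrict z J) * tensor (P - {J}) \<phi> (restrict z (I - J)) \<partial>PM I)"
    by (rule nn_integral_mono)
  also have "\<dots> \<le> epowr (B_const M R) (real m + real (card I) / 2)
      * epowr (\<integral>\<^sup>+x. (\<phi> J x)\<^sup>2 \<partial>PM J) (1/2)
      * epowr (\<integral>\<^sup>+y. (tensor (P - {J}) \<phi> y)\<^sup>2 \<partial>PM (I - J)) (1/2)"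
    using assms(1) JI jk u(1) v_meas by (rule nn_integral_diam_indicator_two_blocks_le)
  also have "\<dots> \<le> epowr (B_const M R) (real m + real (card I) / 2) * epowr 1 (1/2) * epowr 1 (1/2)"
    using u(2) v_square by (intro mult_mono epowr_mono) auto
  finally show "(\<integral>\<^sup>+z. h z * tensor P \<phi> z \<partial>PM I) \<le> epowr (B_const M R) (real m + real (card I) / 2)"
    by simp
qed

lemma pnorm_le_ball_box:
  assumes "finite K" "partition_on K P" "ball_vol R c \<le> b"
    and g: "\<And>y. g y \<le> b ^ m * (\<Prod>i\<in>K. indicator (cball c R) (y i))"
  shows "pnorm M K P g \<le> epowr b (real m + real (card K) / 2)"
proof (rule pnorm_leI)
  fix \<phi> assume \<phi>: "\<phi> \<in> test_functions M P"
  let ?\<chi> = "\<lambda>y. \<Prod>i\<in>K. indicator (cball c R) (y i) :: ennreal"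
  have [measurable]: "?\<chi> \<in> borel_measurable (PM K)"
    using assms(1) by measurable
  have [measurable]: "tensor P \<phi> \<in> borel_measurable (PM K)"
    using \<phi> partition_onD1[OF assms(2)] by (intro tensor_measurable) (auto simp: test_functions_def)
  have "(?\<chi> y)\<^sup>2 = ?\<chi> y" for y
    unfolding prod_power_distrib by (intro prod.cong) (simp_all add: indicator_def)
  then have \<chi>: "(\<integral>\<^sup>+y. (?\<chi> y)\<^sup>2 \<partial>PM K) \<le> b ^ card K"
    using assms(1,3) by (simp add: nn_integral_box power_mono)
  have "(\<integral>\<^sup>+y. g y * tensor P \<phi> y \<partial>PM K) \<le> (\<integral>\<^sup>+y. b ^ m * (?\<chi> y * tensor P \<phi> y) \<partial>PM K)"
    using mult_right_mono[OF g] by (intro nn_integral_mono) (simp add: mult.assoc)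
  also have "\<dots> = b ^ m * (\<integral>\<^sup>+y. ?\<chi> y * tensor P \<phi> y \<partial>PM K)"
    by (rule nn_integral_cmult) measurable
  also have "\<dots> \<le> b ^ m
      * (epowr (\<integral>\<^sup>+y. (?\<chi> y)\<^sup>2 \<partial>PM K) (1/2) * epowr (\<integral>\<^sup>+y. (tensor P \<phi> y)\<^sup>2 \<partial>PM K) (1/2))"
    by (intro mult_left_mono Cauchy_Schwarz_nn_integral_epowr) measurable
  also have "\<dots> \<le> b ^ m * (epowr (b ^ card K) (1/2) * epowr 1 (1/2))"
    using \<chi> tensor_square_integral_le_1[OF assms(2,1) \<phi>]
    by (intro mult_left_mono mult_mono epowr_mono) auto
  also have "\<dots> = epowr b (real m + real (card K) / 2)"
    by (simp add: epowr_power epowr_add epowr_of_nat)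
  finally show "(\<integral>\<^sup>+y. g y * tensor P \<phi> y \<partial>PM K) \<le> epowr b (real m + real (card K) / 2)" .
qed

lemma ess_sup_pnorm_section_le:
  assumes "finite I" "finite K" "I \<inter> K = {}" "c \<in> I" "partition_on K P"
    and h: "\<And>z. h z \<le> ball_vol R (z c) ^ m * diam_indicator (I \<union> K) R z"
  shows "ess_sup (PM I) (\<lambda>x. pnorm M K P (\<lambda>y. h (merge I K (x, y))))
    \<le> epowr (B_const M R) (real m + real (card K) / 2)"
proof (rule ess_sup_le)
  have "AE x in PM I. ball_vol R (x c) \<le> B_const M R"
    using assms(1,4) AE_ball_vol_le_B_const by (rule AE_component)
  then show "AE x in PM I. pnorm M K P (\<lambda>y. h (merge I K (x, y)))
      \<le> epowr (B_const M R) (real m + real (card K) / 2)"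
  proof (rule eventually_mono)
    fix x assume x: "ball_vol R (x c) \<le> B_const M R"
    show "pnorm M K P (\<lambda>y. h (merge I K (x, y))) \<le> epowr (B_const M R) (real m + real (card K) / 2)"
    proof (rule pnorm_le_ball_box[OF assms(2,5) x])
      fix y
      let ?z = "merge I K (x, y)"
      have zc: "?z c = x c" using assms(4) by (simp add: merge_def)
      have "h ?z \<le> ball_vol R (?z c) ^ m * diam_indicator (I \<union> K) R ?z" by (rule h)
      also have "\<dots> \<le> B_const M R ^ m * (\<Prod>i\<in>K. indicator (cball (?z c) R) (?z i))"
        using x zc assms(4) diam_indicator_le_box[of "{}" "I \<union> K" c K R ?z]
        by (intro mult_mono power_mono) auto
      also have "(\<Prod>i\<in>K. indicator (cball (?z c) R) (?z i)) = (\<Prod>i\<in>K. indicator (cball (x c) R) (y i))"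
        using assms(3,4) by (intro prod.cong) (auto simp: merge_def)
      finally show "h ?z \<le> B_const M R ^ m * (\<Prod>i\<in>K. indicator (cball (x c) R) (y i))" .
    qed
  qed
qed

end

theorem proposition3p2:
  fixes M :: "'a::polish_space measure" and d :: nat and E :: "nat set set" and r :: real
  assumes "sets M = sets borel" and "sigma_finite_measure M"
    and "d \<ge> 2" and "connected_graph {1..d} E" and "r > 0"
  defines "f \<equiv> symmetrize d (g_graph E r)"
  shows "\<forall>n\<in>{1..d}.
     pnorm M {1..n} {{1..n}} (marginal M d n f) \<le> epowr (A_const M (real d * r) (2*d - n - 1)) (1/2)
   \<and> epowr (A_const M (real d * r) (2*d - n - 1)) (1/2)
       \<le> epowr (B_const M (real d * r)) (real d - (real n + 1) / 2) * epowr (emeasure M (space M)) (1/2)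
   \<and> (\<forall>P. partition_on {1..n} P \<and> card P \<ge> 2 \<longrightarrow>
          pnorm M {1..n} P (marginal M d n f) \<le> epowr (B_const M (real d * r)) (real d - real n / 2))
   \<and> (\<forall>k\<in>{1..n}. \<forall>P. partition_on {k+1..n} P \<longrightarrow>
          ess_sup (PiM {1..k} (\<lambda>_. M))
            (\<lambda>x. pnorm M {k+1..n} P (\<lambda>y. marginal M d n f (merge {1..k} {k+1..n} (x, y))))
          \<le> epowr (B_const M (real d * r)) (real d - (real n + real k) / 2))"
proof -
  interpret borel_sigma_finite M
    using assms(1,2) by (simp add: borel_sigma_finite_def borel_sigma_finite_axioms_def)
  define R where "R = real d * r"
  have marginal_le: "marginal M d n f z \<le> ball_vol R (z j) ^ (d - n) * diam_indicator {1..n} R z"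
    if "j \<in> {1..n}" "n \<le> d" for n z j
    unfolding f_def R_def using assms(4,5) that by (intro marginal_symmetrize_g_graph_le) auto
  show ?thesis unfolding R_def[symmetric]
  proof (intro ballI conjI allI impI)
    fix n assume n: "n \<in> {1..d}"
    then have exponents: "2 * d - n - 1 = 2 * (d - n) + card {1..n} - 1"
      "real d - (real n + 1) / 2 = real (2 * d - n - 1) / 2"
      "real d - real n / 2 = real (d - n) + real (card {1..n}) / 2"
      by (auto simp: of_nat_diff field_simps)
    show "pnorm M {1..n} {{1..n}} (marginal M d n f) \<le> epowr (A_const M R (2 * d - n - 1)) (1/2)"
      unfolding exponents(1) using n marginal_le by (intro pnorm_single_block_le[of _ 1]) auto
    show "epowr (A_const M R (2 * d - n - 1)) (1/2)
        \<le> epowr (B_const M R) (real d - (real n + 1) / 2) * epowr (emeasure M (space M)) (1/2)"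
      unfolding exponents(2) by (rule epowr_A_const_le)
    fix P assume "partition_on {1..n} P \<and> 2 \<le> card P"
    then show "pnorm M {1..n} P (marginal M d n f) \<le> epowr (B_const M R) (real d - real n / 2)"
      unfolding exponents(3) using n marginal_le by (intro pnorm_partition_le) auto
  next
    fix n k P assume n: "n \<in> {1..d}" and k: "k \<in> {1..n}" and P: "partition_on {k+1..n} P"
    have split: "{1..k} \<union> {k+1..n} = {1..n}" using k by auto
    have exponent: "real d - (real n + real k) / 2 = real (d - n) + real (card {k+1..n}) / 2"
      using n k by (auto simp: of_nat_diff field_simps)
    show "ess_sup (PM {1..k}) (\<lambda>x. pnorm M {k+1..n} P (\<lambda>y. marginal M d n f (merge {1..k} {k+1..n} (x, y))))
        \<le> epowr (B_const M R) (real d - (real n + real k) / 2)"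
      unfolding exponent using n k P marginal_le[of 1 n] split
      by (intro ess_sup_pnorm_section_le[of "{1..k}" "{k+1..n}" 1]) auto
  qed
qed

end
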